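(* Let $m\geq 2$ and $n\geq 2$ be integers, let $T_m$ be a tree of order $m$ and $K_n$ the complete graph of order $n$. Then $$\max\{rvc(T_m),\,n+2\}\leq rvcl(T_m\diamond K_n)\leq 2m+n-2.$$
   Context: All graphs are finite, simple, connected and undirected; $d$ denotes graph distance. A rainbow vertex $k$-coloring of $G$ is a map $c:V(G)\to\{1,\dots,k\}$ such that every two vertices are joined by a path whose internal vertices all receive distinct colors; $rvc(G)$ is the least $k$ for which $G$ has one. For such $c$ let $R_i=c^{-1}(i)$; the rainbow code of $v$ is $(d(v,R_1),\dots,d(v,R_k))$ with $d(v,R_i)=\min_{x\in R_i}d(v,x)$. A locating rainbow $k$-coloring is a rainbow vertex $k$-coloring in which distinct vertices have distinct rainbow codes; $rvcl(G)$ is the least $k$ for which one exists. For graphs $G_m$ (order $m$) and $H_n$ (order $n$) on disjoint vertex sets, the edge corona $G_m\diamond H_n$ is obtained from one copy of $G_m$ and $|E(G_m)|$ vertex-disjoint copies of $H_n$, one per edge of $G_m$, by joining both end vertices of the $j$-th edge of $G_m$ to every vertex of the $j$-th copy of $H_n$. *)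

theory Defs
  imports Main
begin

type_synonym 'a ugraph = "'a set \<times> 'a set set"

definition verts :: "'a ugraph \<Rightarrow> 'a set" where "verts G = fst G"
definition edges :: "'a ugraph \<Rightarrow> 'a set set" where "edges G = snd G"

definition adj :: "'a ugraph \<Rightarrow> 'a \<Rightarrow> 'a \<Rightarrow> bool" where
  "adj G u v \<longleftrightarrow> {u, v} \<in> edges G"

definition wf_graph :: "'a ugraph \<Rightarrow> bool" where
  "wf_graph G \<longleftrightarrow> finite (verts G) \<and>
     (\<forall>e\<in>edges G. \<exists>u v. e = {u, v} \<and> u \<noteq> v \<and> u \<in> verts G \<and> v \<in> verts G)"

definition is_path :: "'a ugraph \<Rightarrow> 'a list \<Rightarrow> 'a \<Rightarrow> 'a \<Rightarrow> bool" where
  "is_path G p u v \<longleftrightarrow> p \<noteq> [] \<and> hd p = u \<and> last p = v \<and> distinct p \<and>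
     set p \<subseteq> verts G \<and> (\<forall>i. Suc i < length p \<longrightarrow> adj G (p ! i) (p ! Suc i))"

definition connected_graph :: "'a ugraph \<Rightarrow> bool" where
  "connected_graph G \<longleftrightarrow> wf_graph G \<and> verts G \<noteq> {} \<and>
     (\<forall>u\<in>verts G. \<forall>v\<in>verts G. \<exists>p. is_path G p u v)"

definition is_cycle :: "'a ugraph \<Rightarrow> 'a list \<Rightarrow> bool" where
  "is_cycle G p \<longleftrightarrow> length p \<ge> 3 \<and> distinct p \<and> set p \<subseteq> verts G \<and>
     (\<forall>i. Suc i < length p \<longrightarrow> adj G (p ! i) (p ! Suc i)) \<and> adj G (last p) (hd p)"

definition is_tree :: "'a ugraph \<Rightarrow> bool" where
  "is_tree G \<longleftrightarrow> connected_graph G \<and> \<not> (\<exists>p. is_cycle G p)"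

definition is_complete :: "'a ugraph \<Rightarrow> bool" where
  "is_complete G \<longleftrightarrow> wf_graph G \<and> (\<forall>u\<in>verts G. \<forall>v\<in>verts G. u \<noteq> v \<longrightarrow> adj G u v)"

definition gdist :: "'a ugraph \<Rightarrow> 'a \<Rightarrow> 'a \<Rightarrow> nat" where
  "gdist G u v = (LEAST k. \<exists>p. is_path G p u v \<and> length p = Suc k)"

definition rainbow_vertex_coloring :: "'a ugraph \<Rightarrow> nat \<Rightarrow> ('a \<Rightarrow> nat) \<Rightarrow> bool" where
  "rainbow_vertex_coloring G k c \<longleftrightarrow> c ` verts G \<subseteq> {1..k} \<and>
     (\<forall>u\<in>verts G. \<forall>v\<in>verts G. u \<noteq> v \<longrightarrow>
        (\<exists>p. is_path G p u v \<and> inj_on c (set (butlast (tl p)))))"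

definition rvc :: "'a ugraph \<Rightarrow> nat" where
  "rvc G = (LEAST k. \<exists>c. rainbow_vertex_coloring G k c)"

definition dist_set :: "'a ugraph \<Rightarrow> 'a \<Rightarrow> 'a set \<Rightarrow> nat" where
  "dist_set G v R = Min ((\<lambda>x. gdist G v x) ` R)"

definition rainbow_code :: "'a ugraph \<Rightarrow> nat \<Rightarrow> ('a \<Rightarrow> nat) \<Rightarrow> 'a \<Rightarrow> nat list" where
  "rainbow_code G k c v = map (\<lambda>i. dist_set G v {x\<in>verts G. c x = i}) [1..<Suc k]"

definition locating_rainbow_coloring :: "'a ugraph \<Rightarrow> nat \<Rightarrow> ('a \<Rightarrow> nat) \<Rightarrow> bool" where
  "locating_rainbow_coloring G k c \<longleftrightarrow> rainbow_vertex_coloring G k c \<and>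
     inj_on (rainbow_code G k c) (verts G)"

definition rvcl :: "'a ugraph \<Rightarrow> nat" where
  "rvcl G = (LEAST k. \<exists>c. locating_rainbow_coloring G k c)"

text \<open>Edge corona G \<diamond> H: vertices Inl v (v in G) and Inr (e, h) (copy of h in the copy of H
  attached to the edge e of G).\<close>
definition edge_corona :: "'a ugraph \<Rightarrow> 'b ugraph \<Rightarrow> ('a + ('a set \<times> 'b)) ugraph" where
  "edge_corona G H =
    (Inl ` verts G \<union> {Inr (e, h) | e h. e \<in> edges G \<and> h \<in> verts H},
     {{Inl u, Inl v} | u v. {u, v} \<in> edges G}
     \<union> {{Inr (e, x), Inr (e, y)} | e x y. e \<in> edges G \<and> {x, y} \<in> edges H}
     \<union> {{Inl a, Inr (e, h)} | a e h. e \<in> edges G \<and> a \<in> e \<and> h \<in> verts H})"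

end

theory Submission
  imports Defs
begin

text \<open>Write \<open>C = T \<diamond> K\<close>. Lower bounds: projecting a path of \<open>C\<close> between base vertices onto
  its base vertices gives a path of \<open>T\<close> (a detour through the copy of \<open>K\<close> at an edge \<open>{a, b}\<close>
  leaves and re-enters the base at \<open>a\<close> or \<open>b\<close>), so a rainbow colouring of \<open>C\<close> restricts to one
  of \<open>T\<close>. For a pendant edge \<open>{u, v}\<close> of \<open>T\<close>, the \<open>n + 1\<close> vertices \<open>u\<close> and the copy of \<open>K\<close>
  at \<open>{u, v}\<close> are pairwise closed twins whose only other neighbour is \<open>v\<close>. Closed twins of
  equal colour have equal rainbow codes, so these vertices get distinct colours; were these all
  the colours, the one coloured like \<open>v\<close> would share a neighbour of every other colour with \<open>v\<close>
  and have the same code as \<open>v\<close>.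

  Upper bound: give the \<open>m\<close> base vertices distinct colours and every copy of a vertex \<open>h\<close> of
  \<open>K\<close> a colour depending on \<open>h\<close> only. Every two vertices are joined by a path whose interior
  lies in the base, and two copies of \<open>h\<close> at edges \<open>e \<noteq> e'\<close> are told apart by their distance
  to the base vertex in \<open>e - e'\<close>. This uses \<open>m + n \<le> 2m + n - 2\<close> colours.\<close>

section \<open>Paths and distances\<close>

lemma is_path_iff_successively:
  "is_path G p u v \<longleftrightarrow> p \<noteq> [] \<and> hd p = u \<and> last p = v \<and> distinct p \<and>
     set p \<subseteq> verts G \<and> successively (adj G) p"
  unfolding is_path_def successively_conv_nth by simp

lemma adj_commute: "adj G a b \<longleftrightarrow> adj G b a"
  unfolding adj_def by (simp add: insert_commute)

lemma is_path_rev: "is_path G p u v \<Longrightarrow> is_path G (rev p) v u"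
  unfolding is_path_iff_successively by (auto simp: hd_rev last_rev adj_commute)

lemma is_path_drop: "is_path G p u v \<Longrightarrow> i < length p \<Longrightarrow> is_path G (drop i p) (p ! i) v"
  unfolding is_path_def by (auto simp: hd_drop_conv_nth dest: in_set_dropD)

lemma is_path_singleton: "x \<in> verts G \<Longrightarrow> is_path G [x] x x"
  unfolding is_path_def by auto

lemma is_path_edge: "adj G x y \<Longrightarrow> x \<noteq> y \<Longrightarrow> x \<in> verts G \<Longrightarrow> y \<in> verts G \<Longrightarrow> is_path G [x, y] x y"
  unfolding is_path_def by auto

lemma is_path_ends_in_verts: "is_path G p x z \<Longrightarrow> x \<in> verts G \<and> z \<in> verts G"
  unfolding is_path_def by (metis hd_in_set last_in_set subsetD)

lemma is_path_from_neighbour: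
  assumes "is_path G p a b" and "x = a \<or> (x \<notin> set p \<and> x \<in> verts G \<and> adj G x a)"
  shows "\<exists>q. is_path G q x b \<and> set q \<subseteq> insert x (set p)"
proof (cases "x = a")
  case False
  then have "is_path G (x # p) x b"
    using assms by (cases p) (auto simp: is_path_iff_successively successively_Cons)
  then show ?thesis by auto
qed (use assms in auto)

lemma set_butlast_tl:
  assumes "distinct xs" and "xs \<noteq> []" and "hd xs \<noteq> last xs"
  shows "set (butlast (tl xs)) = set xs - {hd xs, last xs}"
proof -
  obtain x ys where "xs = x # ys" using \<open>xs \<noteq> []\<close> by (cases xs) auto
  moreover have "ys \<noteq> []" using assms calculation by auto
  then obtain zs z where "ys = zs @ [z]" using rev_exhaust by blast
  ultimately show ?thesis using \<open>distinct xs\<close> by auto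
qed

lemma gdist_le_length: "is_path G p x z \<Longrightarrow> gdist G x z \<le> length p - 1"
  unfolding gdist_def by (rule Least_le) (auto simp: is_path_def)

lemma shortest_path_exists:
  "is_path G p x z \<Longrightarrow> \<exists>q. is_path G q x z \<and> length q = Suc (gdist G x z)"
  unfolding gdist_def
  by (rule LeastI_ex, rule exI[of _ "length p - 1"], rule exI[of _ p]) (cases p, auto simp: is_path_def)

lemma gdist_self: "x \<in> verts G \<Longrightarrow> gdist G x x = 0"
  using gdist_le_length[OF is_path_singleton] by fastforce

lemma gdist_eq_0_imp_eq: "is_path G p x z \<Longrightarrow> gdist G x z = 0 \<Longrightarrow> x = z"
  using shortest_path_exists[of G p x z] unfolding is_path_def
  by (metis last_ConsL length_0_conv length_Suc_conv list.sel(1))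

lemma gdist_eq_1_iff:
  assumes "is_path G p x z"
  shows "gdist G x z = 1 \<longleftrightarrow> adj G x z \<and> x \<noteq> z"
proof
  assume "gdist G x z = 1"
  then obtain q where "is_path G q x z" "length q = 2"
    using shortest_path_exists[OF assms] by auto
  then show "adj G x z \<and> x \<noteq> z"
    unfolding is_path_def by (auto simp: numeral_2_eq_2 length_Suc_conv)
next
  assume xz: "adj G x z \<and> x \<noteq> z"
  then have "is_path G [x, z] x z" using is_path_ends_in_verts[OF assms] by (intro is_path_edge) auto
  from gdist_le_length[OF this] have "gdist G x z \<le> 1" by simp
  moreover have "gdist G x z \<noteq> 0" using gdist_eq_0_imp_eq[OF assms] xz by blast
  ultimately show "gdist G x z = 1" by simp
qed

section \<open>Colour classes and rainbow codes\<close>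

text \<open>Unlike \<open>connected_graph\<close>, this does not require \<open>wf_graph\<close>, so it follows
  from the mere existence of a rainbow colouring.\<close>

definition linked :: "'a ugraph \<Rightarrow> bool" where
  "linked G \<longleftrightarrow> (\<forall>a\<in>verts G. \<forall>b\<in>verts G. \<exists>p. is_path G p a b)"

lemma linked_if_rainbow_vertex_coloring: "rainbow_vertex_coloring G k c \<Longrightarrow> linked G"
  unfolding linked_def rainbow_vertex_coloring_def by (metis is_path_singleton)

lemma linked_if_connected_graph: "connected_graph G \<Longrightarrow> linked G"
  unfolding linked_def connected_graph_def by blast

lemma gdist_pos_if_linked:
  assumes "linked G" and "x \<in> verts G" and "z \<in> verts G" and "x \<noteq> z"
  shows "gdist G x z \<noteq> 0"
proof -
  obtain p where "is_path G p x z" using assms(1-3) unfolding linked_def by blast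
  from gdist_eq_0_imp_eq[OF this] show ?thesis using assms(4) by blast
qed

lemma dist_set_eq_0_iff:
  assumes "linked G" and "finite R" and "R \<subseteq> verts G" and "R \<noteq> {}" and "x \<in> verts G"
  shows "dist_set G x R = 0 \<longleftrightarrow> x \<in> R"
proof
  assume "dist_set G x R = 0"
  moreover have "dist_set G x R \<in> (\<lambda>w. gdist G x w) ` R"
    unfolding dist_set_def using assms(2,4) by (intro Min_in) auto
  ultimately obtain w where "w \<in> R" "gdist G x w = 0" by auto
  moreover from \<open>w \<in> R\<close> have "w \<in> verts G" using assms(3) by blast
  ultimately have "x = w" using gdist_pos_if_linked[OF assms(1,5)] by blast
  then show "x \<in> R" using \<open>w \<in> R\<close> by simp
next
  assume "x \<in> R"
  then have "0 \<in> (\<lambda>w. gdist G x w) ` R" using gdist_self[OF assms(5)] by force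
  then show "dist_set G x R = 0"
    unfolding dist_set_def using assms(2) by (intro Min_eqI) auto
qed

lemma dist_set_eq_1:
  assumes "linked G" and "finite R" and "R \<subseteq> verts G" and "x \<in> verts G" and "x \<notin> R"
    and "w \<in> R" and "adj G x w"
  shows "dist_set G x R = 1"
proof -
  have "1 \<le> gdist G x w'" if "w' \<in> R" for w'
  proof -
    have "w' \<in> verts G" "x \<noteq> w'" using that assms(3,5) by auto
    from gdist_pos_if_linked[OF assms(1,4) this] show ?thesis by simp
  qed
  moreover have "gdist G x w = 1"
  proof -
    have "w \<in> verts G" "x \<noteq> w" using assms(3,5,6) by auto
    then have "is_path G [x, w] x w" using assms(4,7) by (intro is_path_edge)
    from gdist_eq_1_iff[OF this] show ?thesis using assms(7) \<open>x \<noteq> w\<close> by simp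
  qed
  moreover from this have "1 \<in> (\<lambda>w. gdist G x w) ` R" using assms(6) by force
  ultimately show ?thesis
    unfolding dist_set_def using assms(2) by (intro Min_eqI) auto
qed

lemma rainbow_code_eq_iff:
  "rainbow_code G k c x = rainbow_code G k c y \<longleftrightarrow>
   (\<forall>i\<in>{1..k}. dist_set G x {w \<in> verts G. c w = i} = dist_set G y {w \<in> verts G. c w = i})"
  unfolding rainbow_code_def map_eq_conv by auto

lemma rvc_le: "rainbow_vertex_coloring G k c \<Longrightarrow> rvc G \<le> k"
  unfolding rvc_def by (rule Least_le) blast

lemma rvcl_le: "locating_rainbow_coloring G k c \<Longrightarrow> rvcl G \<le> k"
  unfolding rvcl_def by (rule Least_le) blast

lemma locating_rainbow_coloring_rvcl:
  "locating_rainbow_coloring G k c \<Longrightarrow> \<exists>c. locating_rainbow_coloring G (rvcl G) c"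
  unfolding rvcl_def by (rule LeastI_ex) blast

section \<open>Closed twins\<close>

definition closed_twins :: "'a ugraph \<Rightarrow> 'a \<Rightarrow> 'a \<Rightarrow> bool" where
  "closed_twins G x y \<longleftrightarrow> x \<noteq> y \<and> adj G x y \<and> (\<forall>z. z \<noteq> x \<longrightarrow> z \<noteq> y \<longrightarrow> adj G x z = adj G y z)"

lemma closed_twins_commute: "closed_twins G x y \<longleftrightarrow> closed_twins G y x"
  unfolding closed_twins_def using adj_commute by metis

lemma gdist_closed_twin_le:
  assumes "linked G" and "closed_twins G x y" and "x \<in> verts G" and "y \<in> verts G"
    and "z \<in> verts G" and "z \<noteq> x" and "z \<noteq> y"
  shows "gdist G y z \<le> gdist G x z"
proof -
  obtain p0 where "is_path G p0 x z" using assms(1,3,5) unfolding linked_def by blast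
  from shortest_path_exists[OF this]
  obtain p where p: "is_path G p x z" "length p = Suc (gdist G x z)" by blast
  from p(1) obtain r where r: "p = x # r" unfolding is_path_def by (cases p) auto
  then have ps: "distinct (x # r)" "set r \<subseteq> verts G" "successively (adj G) (x # r)"
    "last (x # r) = z"
    using p(1) unfolding is_path_iff_successively by auto
  have "r \<noteq> []" using ps(4) assms(6) by auto
  show ?thesis
  proof (cases "y \<in> set r")
    case True
    then obtain i where "i < length r" "r ! i = y" by (meson in_set_conv_nth)
    then have "is_path G (drop (Suc i) p) y z" using is_path_drop[OF p(1), of "Suc i"] r by simp
    from gdist_le_length[OF this] show ?thesis using p(2) by simp
  next
    case False
    obtain w r' where r': "r = w # r'" using \<open>r \<noteq> []\<close> by (cases r) auto
    have "w \<noteq> x" "w \<noteq> y" "adj G x w" using ps(1,3) False r' by auto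
    then have "adj G y w" using assms(2) unfolding closed_twins_def by blast
    then have "is_path G (y # r) y z"
      using ps r' False assms(4) unfolding is_path_iff_successively by auto
    from gdist_le_length[OF this] show ?thesis using p(2) r by simp
  qed
qed

lemma gdist_closed_twin_eq:
  assumes "linked G" and "closed_twins G x y" and "x \<in> verts G" and "y \<in> verts G"
    and "z \<in> verts G" and "z \<noteq> x" and "z \<noteq> y"
  shows "gdist G x z = gdist G y z"
  using gdist_closed_twin_le[OF assms] assms closed_twins_commute
    gdist_closed_twin_le[of G y x z] by fastforce

lemma gdist_image_closed_twins:
  assumes "linked G" and "closed_twins G x y" and "x \<in> verts G" and "y \<in> verts G"
    and "R \<subseteq> verts G" and "x \<in> R \<longleftrightarrow> y \<in> R"
  shows "(\<lambda>w. gdist G x w) ` R = (\<lambda>w. gdist G y w) ` R"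
proof -
  define \<sigma> where "\<sigma> w = (if w = x then y else if w = y then x else w)" for w
  have "gdist G x w = gdist G y (\<sigma> w)" if "w \<in> R" for w
  proof -
    have "x \<noteq> y" "adj G x y" "adj G y x"
      using assms(2) adj_commute[of G] unfolding closed_twins_def by auto
    then have "gdist G x y = 1" "gdist G y x = 1"
      using gdist_eq_1_iff[OF is_path_edge[of G x y]] gdist_eq_1_iff[OF is_path_edge[of G y x]]
        assms(3,4) by auto
    then show ?thesis
      using gdist_closed_twin_eq[OF assms(1-4)] gdist_self[OF assms(3)] gdist_self[OF assms(4)]
        assms(5) that
      unfolding \<sigma>_def by auto
  qed
  moreover have "\<sigma> ` R = R" using assms(6) unfolding \<sigma>_def by auto
  ultimately show ?thesis by (metis (no_types, lifting) image_cong image_image)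
qed

lemma rainbow_code_eq_if_closed_twins:
  assumes "linked G" and "closed_twins G x y" and "x \<in> verts G" and "y \<in> verts G"
    and "c x = c y"
  shows "rainbow_code G k c x = rainbow_code G k c y"
  unfolding rainbow_code_eq_iff dist_set_def
  using gdist_image_closed_twins[OF assms(1-4)] assms(3-5) by simp

lemma rainbow_code_eq_if_common_neighbours:
  assumes "linked G" and "finite (verts G)" and "x \<in> verts G" and "y \<in> verts G"
    and "c x = c y"
    and common: "\<And>i. i \<in> {1..k} \<Longrightarrow> i \<noteq> c x \<Longrightarrow> \<exists>w\<in>verts G. c w = i \<and> adj G x w \<and> adj G y w"
  shows "rainbow_code G k c x = rainbow_code G k c y"
  unfolding rainbow_code_eq_iff
proof
  fix i assume i: "i \<in> {1..k}"
  let ?R = "{w \<in> verts G. c w = i}"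
  have R: "finite ?R" "?R \<subseteq> verts G" using assms(2) by auto
  show "dist_set G x ?R = dist_set G y ?R"
  proof (cases "i = c x")
    case True
    then have "x \<in> ?R" "y \<in> ?R" using assms(3-5) by auto
    moreover have "?R \<noteq> {}" using calculation by blast
    ultimately show ?thesis
      using dist_set_eq_0_iff[OF assms(1) R, of x] dist_set_eq_0_iff[OF assms(1) R, of y]
        assms(3,4) by simp
  next
    case False
    then obtain w where "w \<in> ?R" "adj G x w" "adj G y w" using common[OF i] by blast
    moreover have "x \<notin> ?R" "y \<notin> ?R" using False assms(5) by auto
    ultimately show ?thesis
      using dist_set_eq_1[OF assms(1) R assms(3)] dist_set_eq_1[OF assms(1) R assms(4)] by simp
  qed
qed

lemma same_colour_if_rainbow_code_eq:
  assumes "linked G" and "finite (verts G)" and "x \<in> verts G" and "y \<in> verts G"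
    and "c ` verts G \<subseteq> {1..k}" and "rainbow_code G k c x = rainbow_code G k c y"
  shows "c x = c y"
proof -
  let ?R = "{w \<in> verts G. c w = c x}"
  have R: "finite ?R" "?R \<subseteq> verts G" "?R \<noteq> {}" using assms(2,3) by auto
  have "dist_set G x ?R = dist_set G y ?R"
    using assms(3,5,6) unfolding rainbow_code_eq_iff by blast
  moreover have "dist_set G x ?R = 0" using dist_set_eq_0_iff[OF assms(1) R assms(3)] assms(3) by simp
  ultimately have "y \<in> ?R" using dist_set_eq_0_iff[OF assms(1) R assms(4)] by simp
  then show ?thesis by simp
qed

lemma card_twin_clique_less_colours:
  assumes loc: "locating_rainbow_coloring G k c" and fin: "finite (verts G)"
    and S: "S \<subseteq> verts G" and v: "v \<in> verts G" "v \<notin> S"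
    and nbrs: "\<And>s z. s \<in> S \<Longrightarrow> adj G s z \<longleftrightarrow> (z \<in> S \<or> z = v) \<and> z \<noteq> s"
  shows "card S < k"
proof (rule ccontr)
  assume "\<not> card S < k"
  have rb: "rainbow_vertex_coloring G k c" and inj: "inj_on (rainbow_code G k c) (verts G)"
    using loc unfolding locating_rainbow_coloring_def by auto
  have lk: "linked G" using linked_if_rainbow_vertex_coloring[OF rb] .
  have col: "c ` verts G \<subseteq> {1..k}" using rb unfolding rainbow_vertex_coloring_def by blast
  have twins: "closed_twins G s t" if "s \<in> S" "t \<in> S" "s \<noteq> t" for s t
    unfolding closed_twins_def using nbrs[OF that(1)] nbrs[OF that(2)] that by auto
  have "inj_on c S"
  proof (rule inj_onI, rule ccontr)
    fix s t assume st: "s \<in> S" "t \<in> S" "c s = c t" "s \<noteq> t"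
    then have "rainbow_code G k c s = rainbow_code G k c t"
      using rainbow_code_eq_if_closed_twins[OF lk twins] S by blast
    then show False using inj_onD[OF inj] st S by blast
  qed
  then have "card (c ` S) = card S" by (rule card_image)
  moreover have cS: "c ` S \<subseteq> {1..k}" using col S by blast
  moreover from this have "card (c ` S) \<le> k" using card_mono[of "{1..k}"] by fastforce
  ultimately have "card (c ` S) = card {1..k}" using \<open>\<not> card S < k\<close> by simp
  with cS have "c ` S = {1..k}" by (simp add: card_subset_eq)
  then obtain x where x: "x \<in> S" "c x = c v" using col v(1) by (metis image_iff image_subset_iff)
  have "rainbow_code G k c x = rainbow_code G k c v"
  proof (rule rainbow_code_eq_if_common_neighbours[OF lk fin])
    show "x \<in> verts G" "v \<in> verts G" "c x = c v" using x S v by auto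
    fix i assume "i \<in> {1..k}" "i \<noteq> c x"
    then obtain w where "w \<in> S" "c w = i" using \<open>c ` S = {1..k}\<close> by (metis imageE)
    then have "w \<in> verts G" "adj G x w" "adj G v w"
      using nbrs[OF x(1)] nbrs[of w v] S v(2) adj_commute[of G] \<open>i \<noteq> c x\<close> by auto
    then show "\<exists>w\<in>verts G. c w = i \<and> adj G x w \<and> adj G v w" using \<open>c w = i\<close> by blast
  qed
  from inj_onD[OF inj this] show False using x S v by blast
qed

section \<open>Edges and trees\<close>

lemma wf_graph_edgeD:
  "wf_graph G \<Longrightarrow> {a, b} \<in> edges G \<Longrightarrow> a \<noteq> b \<and> a \<in> verts G \<and> b \<in> verts G"
  unfolding wf_graph_def by (metis doubleton_eq_iff)

lemma wf_graph_edgeE: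
  assumes "wf_graph G" and "e \<in> edges G"
  obtains a b where "e = {a, b}" and "a \<noteq> b" and "a \<in> verts G" and "b \<in> verts G"
  using assms unfolding wf_graph_def by blast

lemma finite_edges: "wf_graph G \<Longrightarrow> finite (edges G)"
  unfolding wf_graph_def
  by (rule finite_subset[of _ "Pow (verts G)"]) auto

lemma edge_has_endpoint_outside:
  assumes "wf_graph G" and "e \<in> edges G" and "e' \<in> edges G" and "e \<noteq> e'"
  obtains s where "s \<in> e" and "s \<notin> e'"
proof -
  obtain a b where "e = {a, b}" "a \<noteq> b" using wf_graph_edgeE[OF assms(1,2)] by metis
  moreover obtain a' b' where "e' = {a', b'}" using wf_graph_edgeE[OF assms(1,3)] by metis
  ultimately have "\<not> e \<subseteq> e'" using assms(4) by (auto simp: doubleton_eq_iff)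
  then show ?thesis using that by blast
qed

lemma is_complete_edge_iff:
  "is_complete K \<Longrightarrow> {x, y} \<in> edges K \<longleftrightarrow> x \<noteq> y \<and> x \<in> verts K \<and> y \<in> verts K"
  unfolding is_complete_def adj_def using wf_graph_edgeD by metis

lemma longest_path_exists:
  assumes "finite (verts G)" and "is_path G p0 a b"
  obtains p where "is_path G p (hd p) (last p)" and "length p0 \<le> length p"
    and "\<And>q. is_path G q (hd q) (last q) \<Longrightarrow> length q \<le> length p"
proof -
  have "length q < Suc (card (verts G))" if "is_path G q (hd q) (last q)" for q
    using that assms(1) unfolding is_path_def
    by (metis card_mono distinct_card less_Suc_eq_le)
  moreover have "is_path G p0 (hd p0) (last p0)" using assms(2) unfolding is_path_def by auto
  ultimately show ?thesis
    using that ex_has_greatest_nat[of "\<lambda>q. is_path G q (hd q) (last q)" p0 length] by metis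
qed

lemma longest_path_end_neighbour:
  assumes acyclic: "\<not> (\<exists>c. is_cycle G c)" and wf: "wf_graph G"
    and p: "is_path G p (hd p) (last p)" and len: "2 \<le> length p"
    and longest: "\<And>q. is_path G q (hd q) (last q) \<Longrightarrow> length q \<le> length p"
    and w: "{last p, w} \<in> edges G"
  shows "w = p ! (length p - 2)"
proof -
  have ps: "distinct p" "set p \<subseteq> verts G" "successively (adj G) p" "p \<noteq> []"
    using p unfolding is_path_iff_successively by auto
  have last: "last p = p ! (length p - 1)" using ps(4) by (simp add: last_conv_nth)
  have "w \<noteq> last p" "w \<in> verts G" using wf_graph_edgeD[OF wf w] by auto
  show ?thesis
  proof (cases "w \<in> set p")
    case False
    have "is_path G (p @ [w]) (hd (p @ [w])) (last (p @ [w]))"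
      unfolding is_path_iff_successively using ps False \<open>w \<in> verts G\<close> w
      by (auto simp: successively_append_iff adj_def insert_commute)
    then show ?thesis using longest by fastforce
  next
    case True
    then obtain j where j: "j < length p" "p ! j = w" by (meson in_set_conv_nth)
    show ?thesis
    proof (rule ccontr)
      assume "w \<noteq> p ! (length p - 2)"
      then have "j \<noteq> length p - 2" "j \<noteq> length p - 1" using j \<open>w \<noteq> last p\<close> last by auto
      then have "j < length p - 2" using j(1) by linarith
      then have "is_cycle G (drop j p)"
        using ps j w last unfolding is_cycle_def adj_def
        by (auto simp: successively_conv_nth hd_drop_conv_nth dest: in_set_dropD)
      then show False using acyclic by blast
    qed
  qed
qed

lemma tree_has_pendant_edge:
  assumes "is_tree T" and "2 \<le> card (verts T)"
  obtains u v where "{u, v} \<in> edges T" and "\<And>w. {u, w} \<in> edges T \<Longrightarrow> w = v"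
proof -
  have wf: "wf_graph T" and acyclic: "\<not> (\<exists>c. is_cycle T c)" and "linked T"
    using assms(1) linked_if_connected_graph[of T] unfolding is_tree_def connected_graph_def by auto
  have fin: "finite (verts T)" using wf unfolding wf_graph_def by simp
  obtain a b where ab: "a \<in> verts T" "b \<in> verts T" "a \<noteq> b"
    using assms(2) card_le_Suc0_iff_eq[OF fin] by (metis not_less_eq_eq numeral_2_eq_2)
  then obtain p0 where p0: "is_path T p0 a b" using \<open>linked T\<close> unfolding linked_def by blast
  then have "2 \<le> length p0" using ab(3) unfolding is_path_def
    by (cases p0) (auto simp: numeral_2_eq_2 Suc_le_eq)
  obtain p where p: "is_path T p (hd p) (last p)" "length p0 \<le> length p"
    and longest: "\<And>q. is_path T q (hd q) (last q) \<Longrightarrow> length q \<le> length p"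
    using longest_path_exists[OF fin p0] by blast
  have len: "2 \<le> length p" using p(2) \<open>2 \<le> length p0\<close> by simp
  then have "Suc (length p - 2) < length p" "Suc (length p - 2) = length p - 1" by auto
  then have "adj T (p ! (length p - 2)) (last p)"
    using p(1) last_conv_nth[of p] unfolding is_path_def by (metis)
  then have "{last p, p ! (length p - 2)} \<in> edges T" by (simp add: adj_def insert_commute)
  then show ?thesis
    using that longest_path_end_neighbour[OF acyclic wf p(1) len longest] by blast
qed

section \<open>Edge coronas\<close>

lemma edge_corona_Inl_in_verts [simp]: "Inl a \<in> verts (edge_corona G H) \<longleftrightarrow> a \<in> verts G"
  unfolding edge_corona_def verts_def by auto

lemma edge_corona_Inr_in_verts [simp]:
  "Inr (e, h) \<in> verts (edge_corona G H) \<longleftrightarrow> e \<in> edges G \<and> h \<in> verts H"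
  unfolding edge_corona_def verts_def by auto

lemma edge_corona_adj_Inl_Inl [simp]: "adj (edge_corona G H) (Inl a) (Inl b) \<longleftrightarrow> {a, b} \<in> edges G"
  unfolding edge_corona_def adj_def edges_def by (auto simp: doubleton_eq_iff insert_commute)

lemma edge_corona_adj_Inl_Inr [simp]:
  "adj (edge_corona G H) (Inl a) (Inr (e, h)) \<longleftrightarrow> e \<in> edges G \<and> a \<in> e \<and> h \<in> verts H"
  unfolding edge_corona_def adj_def edges_def verts_def by (auto simp: doubleton_eq_iff insert_commute)

lemma edge_corona_adj_Inr_Inl [simp]:
  "adj (edge_corona G H) (Inr (e, h)) (Inl a) \<longleftrightarrow> e \<in> edges G \<and> a \<in> e \<and> h \<in> verts H"
  using edge_corona_adj_Inl_Inr adj_commute by metis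

lemma edge_corona_adj_Inr_Inr [simp]:
  "adj (edge_corona G H) (Inr (e, x)) (Inr (e', y)) \<longleftrightarrow> e = e' \<and> e \<in> edges G \<and> {x, y} \<in> edges H"
  unfolding edge_corona_def adj_def edges_def by (auto simp: doubleton_eq_iff insert_commute)

lemma finite_verts_edge_corona:
  assumes "wf_graph G" and "finite (verts H)"
  shows "finite (verts (edge_corona G H))"
proof -
  have "verts (edge_corona G H) = Inl ` verts G \<union> (\<lambda>(e, h). Inr (e, h)) ` (edges G \<times> verts H)"
    unfolding edge_corona_def verts_def by auto
  then show ?thesis using assms finite_edges[OF assms(1)] unfolding wf_graph_def by simp
qed

lemma edge_corona_pendant_block_adj:
  assumes wf: "wf_graph G" and K: "is_complete K"
    and uv: "{u, v} \<in> edges G" and pendant: "\<And>w. {u, w} \<in> edges G \<Longrightarrow> w = v"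
    and s: "s \<in> insert (Inl u) ((\<lambda>h. Inr ({u, v}, h)) ` verts K)"
  shows "adj (edge_corona G K) s z \<longleftrightarrow>
    (z \<in> insert (Inl u) ((\<lambda>h. Inr ({u, v}, h)) ` verts K) \<or> z = Inl v) \<and> z \<noteq> s"
proof -
  have "u \<noteq> v" using wf_graph_edgeD[OF wf uv] by simp
  have edge_at_u: "e \<in> edges G \<and> u \<in> e \<longleftrightarrow> e = {u, v}" for e
  proof
    assume "e \<in> edges G \<and> u \<in> e"
    then obtain w where "e = {u, w}" "{u, w} \<in> edges G"
      using wf_graph_edgeE[OF wf] by (metis insert_commute insert_iff singletonD)
    then show "e = {u, v}" using pendant by blast
  qed (use uv in auto)
  show ?thesis
  proof (cases z)
    case (Inl w)
    have "{u, w} \<in> edges G \<longleftrightarrow> w = v" using pendant uv by blast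
    then show ?thesis using s Inl uv \<open>u \<noteq> v\<close> by (auto simp: insert_commute)
  next
    case (Inr r)
    then obtain e h where "z = Inr (e, h)" by (cases r) auto
    moreover have "{h'} \<notin> edges K" for h' using is_complete_edge_iff[OF K, of h' h'] by simp
    ultimately show ?thesis using s edge_at_u[of e] uv is_complete_edge_iff[OF K] by auto
  qed
qed

lemma edge_corona_locating_colours_ge:
  assumes T: "is_tree T" "2 \<le> card (verts T)"
    and K: "is_complete K" "finite (verts K)"
    and loc: "locating_rainbow_coloring (edge_corona T K) k c"
  shows "card (verts K) + 2 \<le> k"
proof -
  have wf: "wf_graph T" using T(1) unfolding is_tree_def connected_graph_def by auto
  obtain u v where uv: "{u, v} \<in> edges T" and pendant: "\<And>w. {u, w} \<in> edges T \<Longrightarrow> w = v"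
    using tree_has_pendant_edge[OF T] by blast
  have "u \<in> verts T" "v \<in> verts T" "u \<noteq> v" using wf_graph_edgeD[OF wf uv] by auto
  define S where "S = insert (Inl u) ((\<lambda>h. Inr ({u, v}, h)) ` verts K)"
  have "Inl u \<notin> (\<lambda>h. Inr ({u, v}, h)) ` verts K" by auto
  moreover have "inj_on (\<lambda>h. Inr ({u, v}, h)) (verts K)" by (auto simp: inj_on_def)
  ultimately have "card S = card (verts K) + 1" unfolding S_def using K(2) card_image by fastforce
  moreover have "card S < k"
  proof (rule card_twin_clique_less_colours[OF loc finite_verts_edge_corona[OF wf K(2)]])
    show "S \<subseteq> verts (edge_corona T K)" "Inl v \<in> verts (edge_corona T K)" "Inl v \<notin> S"
      unfolding S_def using uv \<open>u \<in> verts T\<close> \<open>v \<in> verts T\<close> \<open>u \<noteq> v\<close> by auto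
    show "adj (edge_corona T K) s z \<longleftrightarrow> (z \<in> S \<or> z = Inl v) \<and> z \<noteq> s" if "s \<in> S" for s z
      using edge_corona_pendant_block_adj[OF wf K(1) uv pendant] that unfolding S_def by blast
  qed
  ultimately show ?thesis by simp
qed

section \<open>Restricting to the base\<close>

fun lefts :: "('a + 'b) list \<Rightarrow> 'a list" where
  "lefts [] = []"
| "lefts (Inl a # r) = a # lefts r"
| "lefts (Inr b # r) = lefts r"

lemma lefts_append: "lefts (xs @ ys) = lefts xs @ lefts ys"
  by (induction xs rule: lefts.induct) auto

lemma set_lefts: "set (lefts xs) = {a. Inl a \<in> set xs}"
  by (induction xs rule: lefts.induct) auto

lemma distinct_lefts: "distinct xs \<Longrightarrow> distinct (lefts xs)"
  by (induction xs rule: lefts.induct) (auto simp: set_lefts)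

lemma successively_if_distinct:
  "successively (\<lambda>a b. a = b \<or> R a b) xs \<Longrightarrow> distinct xs \<Longrightarrow> successively R xs"
  by (induction xs) (auto simp: successively_Cons dest: hd_in_set)

lemma eq_or_adj_if_in_edge:
  assumes "wf_graph G" and "e \<in> edges G" and "a \<in> e" and "b \<in> e"
  shows "a = b \<or> adj G a b"
proof -
  obtain x y where "e = {x, y}" using wf_graph_edgeE[OF assms(1,2)] by blast
  then show ?thesis using assms(2-4) by (auto simp: adj_def insert_commute)
qed

text \<open>The last conjunct is the induction invariant: a path starting in the copy of \<open>H\<close> at \<open>e\<close>
  first enters the base at an end of \<open>e\<close>.\<close>

lemma successively_lefts_edge_corona:
  assumes "wf_graph G"
  shows "successively (adj (edge_corona G H)) p \<Longrightarrow> p \<noteq> [] \<Longrightarrow> last p \<in> range Inl \<Longrightarrow>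
    successively (\<lambda>a b. a = b \<or> adj G a b) (lefts p) \<and> lefts p \<noteq> [] \<and>
    (\<forall>e h. hd p = Inr (e, h) \<longrightarrow> hd (lefts p) \<in> e)"
proof (induction p)
  case (Cons x r)
  show ?case
  proof (cases r)
    case Nil
    then show ?thesis using Cons.prems by auto
  next
    case (Cons y r')
    have IH: "successively (\<lambda>a b. a = b \<or> adj G a b) (lefts r)" "lefts r \<noteq> []"
      "\<And>e h. y = Inr (e, h) \<Longrightarrow> hd (lefts r) \<in> e"
      using Cons.IH Cons.prems Cons by (auto simp: successively_Cons)
    have xy: "adj (edge_corona G H) x y" using Cons.prems Cons by simp
    show ?thesis
    proof (cases x)
      case (Inl a)
      have "a = hd (lefts r) \<or> adj G a (hd (lefts r))"
      proof (cases y)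
        case (Inl b)
        then show ?thesis using xy Cons \<open>x = Inl a\<close> by (simp add: adj_def[of G])
      next
        case (Inr q)
        then obtain e h where "y = Inr (e, h)" by (cases q) auto
        then show ?thesis using xy \<open>x = Inl a\<close> IH(3) eq_or_adj_if_in_edge[OF assms] by auto
      qed
      then show ?thesis using IH(1,2) \<open>x = Inl a\<close> by (cases "lefts r") (auto simp: successively_Cons)
    next
      case (Inr q)
      then obtain e h where x: "x = Inr (e, h)" by (cases q) auto
      have "hd (lefts r) \<in> e"
      proof (cases y)
        case (Inl b)
        then show ?thesis using xy Cons x by auto
      next
        case (Inr q')
        then obtain e' h' where "y = Inr (e', h')" by (cases q') auto
        then show ?thesis using xy x IH(3) by auto
      qed
      then show ?thesis using IH(1,2) x by auto
    qed
  qed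
qed simp

lemma is_path_lefts_edge_corona:
  assumes "wf_graph G" and p: "is_path (edge_corona G H) p (Inl u) (Inl v)"
  shows "is_path G (lefts p) u v"
proof -
  have ps: "p \<noteq> []" "hd p = Inl u" "last p = Inl v" "distinct p"
    "set p \<subseteq> verts (edge_corona G H)" "successively (adj (edge_corona G H)) p"
    using p unfolding is_path_iff_successively by auto
  obtain r where "p = Inl u # r" using ps(1,2) by (cases p) auto
  then have "hd (lefts p) = u" by simp
  moreover have "last (lefts p) = v"
    using ps(1,3) append_butlast_last_id[of p] lefts_append[of "butlast p" "[Inl v]"]
    by (metis lefts.simps(1,2) last_snoc)
  moreover have "set (lefts p) \<subseteq> verts G" using ps(5) by (auto simp: set_lefts)
  moreover have "successively (\<lambda>a b. a = b \<or> adj G a b) (lefts p)" "lefts p \<noteq> []"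
    using successively_lefts_edge_corona[OF assms(1) ps(6,1)] ps(3) by auto
  moreover note distinct_lefts[OF ps(4)]
  ultimately show ?thesis
    unfolding is_path_iff_successively using successively_if_distinct by simp
qed

lemma rainbow_vertex_coloring_restrict_edge_corona:
  assumes wf: "wf_graph G" and rb: "rainbow_vertex_coloring (edge_corona G H) k c"
  shows "rainbow_vertex_coloring G k (c \<circ> Inl)"
  unfolding rainbow_vertex_coloring_def
proof (intro conjI ballI impI)
  show "(c \<circ> Inl) ` verts G \<subseteq> {1..k}" using rb unfolding rainbow_vertex_coloring_def by auto
  fix u v assume uv: "u \<in> verts G" "v \<in> verts G" "u \<noteq> v"
  have "\<forall>x\<in>verts (edge_corona G H). \<forall>y\<in>verts (edge_corona G H). x \<noteq> y \<longrightarrow>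
      (\<exists>p. is_path (edge_corona G H) p x y \<and> inj_on c (set (butlast (tl p))))"
    using rb unfolding rainbow_vertex_coloring_def by blast
  from this[rule_format, of "Inl u" "Inl v"] obtain p
    where p: "is_path (edge_corona G H) p (Inl u) (Inl v)" and inj: "inj_on c (set (butlast (tl p)))"
    using uv by auto
  have q: "is_path G (lefts p) u v" using is_path_lefts_edge_corona[OF wf p] .
  have "set (butlast (tl p)) = set p - {Inl u, Inl v}"
    using set_butlast_tl[of p] p uv(3) unfolding is_path_def by auto
  moreover have "set (butlast (tl (lefts p))) = set (lefts p) - {u, v}"
    using set_butlast_tl[of "lefts p"] q uv(3) unfolding is_path_def by auto
  ultimately have "Inl ` set (butlast (tl (lefts p))) \<subseteq> set (butlast (tl p))"
    by (auto simp: set_lefts)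
  then have "inj_on (c \<circ> Inl) (set (butlast (tl (lefts p))))"
    using inj_on_subset[OF inj] by (simp add: comp_inj_on)
  then show "\<exists>p. is_path G p u v \<and> inj_on (c \<circ> Inl) (set (butlast (tl p)))" using q by blast
qed

section \<open>A locating colouring of an edge corona\<close>

lemma is_path_map_Inl_edge_corona:
  "is_path G p a b \<Longrightarrow> is_path (edge_corona G H) (map Inl p) (Inl a) (Inl b)"
  unfolding is_path_iff_successively
  by (auto simp: successively_map hd_map last_map distinct_map adj_def[of G])

lemma edge_corona_vertex_near_base:
  assumes "wf_graph G" and "x \<in> verts (edge_corona G H)"
  obtains s where "s \<in> verts G" and "x = Inl s \<or> (x \<notin> range Inl \<and> adj (edge_corona G H) x (Inl s))"
proof (cases x)
  case (Inl a)
  then show ?thesis using that assms(2) by auto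
next
  case (Inr q)
  then obtain e h where x: "x = Inr (e, h)" by (cases q) auto
  then have "e \<in> edges G" "h \<in> verts H" using assms(2) by auto
  then obtain s t where "e = {s, t}" "s \<in> verts G" using wf_graph_edgeE[OF assms(1)] by metis
  then show ?thesis using that x \<open>e \<in> edges G\<close> \<open>h \<in> verts H\<close> by auto
qed

lemma edge_corona_path_through_base:
  assumes "linked G" and "wf_graph G"
    and x: "x \<in> verts (edge_corona G H)" and y: "y \<in> verts (edge_corona G H)" and "x \<noteq> y"
  shows "\<exists>p. is_path (edge_corona G H) p x y \<and> set (butlast (tl p)) \<subseteq> Inl ` verts G"
proof -
  obtain s where s: "s \<in> verts G" "x = Inl s \<or> (x \<notin> range Inl \<and> adj (edge_corona G H) x (Inl s))"
    using edge_corona_vertex_near_base[OF assms(2) x] by blast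
  obtain t where t: "t \<in> verts G" "y = Inl t \<or> (y \<notin> range Inl \<and> adj (edge_corona G H) y (Inl t))"
    using edge_corona_vertex_near_base[OF assms(2) y] by blast
  obtain p0 where p0: "is_path G p0 s t" using assms(1) s(1) t(1) unfolding linked_def by blast
  have q: "is_path (edge_corona G H) (map Inl p0) (Inl s) (Inl t)"
    using is_path_map_Inl_edge_corona[OF p0] .
  have q_base: "set (map Inl p0) \<subseteq> Inl ` verts G" using p0 unfolding is_path_def by auto
  obtain p1 where p1: "is_path (edge_corona G H) p1 x (Inl t)" "set p1 \<subseteq> insert x (set (map Inl p0))"
    using is_path_from_neighbour[OF q, of x] s(2) x by auto
  have "y \<notin> set (rev p1)" if "y \<notin> range Inl" using p1(2) that \<open>x \<noteq> y\<close> by auto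
  then obtain p2 where p2: "is_path (edge_corona G H) p2 y x" "set p2 \<subseteq> insert y (set (rev p1))"
    using is_path_from_neighbour[OF is_path_rev[OF p1(1)], of y] t(2) y by auto
  have p: "is_path (edge_corona G H) (rev p2) x y" using is_path_rev[OF p2(1)] by simp
  then have "set (butlast (tl (rev p2))) = set p2 - {x, y}"
    using set_butlast_tl[of "rev p2"] \<open>x \<noteq> y\<close> unfolding is_path_def by auto
  moreover have "set p2 - {x, y} \<subseteq> set (map Inl p0)" using p1(2) p2(2) by auto
  ultimately have "set (butlast (tl (rev p2))) \<subseteq> Inl ` verts G" using q_base by blast
  then show ?thesis using p by blast
qed

definition edge_corona_colouring :: "nat \<Rightarrow> ('a \<Rightarrow> nat) \<Rightarrow> ('b \<Rightarrow> nat) \<Rightarrow> 'a + 'a set \<times> 'b \<Rightarrow> nat" where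
  "edge_corona_colouring m f g = case_sum (\<lambda>a. Suc (f a)) (\<lambda>(e, h). m + Suc (g h))"

lemma edge_corona_colouring_simps [simp]:
  "edge_corona_colouring m f g (Inl a) = Suc (f a)"
  "edge_corona_colouring m f g (Inr (e, h)) = m + Suc (g h)"
  unfolding edge_corona_colouring_def by simp_all

lemma rainbow_edge_corona_colouring:
  assumes "linked G" and "wf_graph G"
    and f: "inj_on f (verts G)" "f ` verts G \<subseteq> {..<m}" and g: "g ` verts H \<subseteq> {..<n}"
  shows "rainbow_vertex_coloring (edge_corona G H) (m + n) (edge_corona_colouring m f g)"
  unfolding rainbow_vertex_coloring_def
proof (intro conjI ballI impI)
  let ?c = "edge_corona_colouring m f g"
  show "?c ` verts (edge_corona G H) \<subseteq> {1..m + n}"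
  proof
    fix i assume "i \<in> ?c ` verts (edge_corona G H)"
    then obtain x where x: "x \<in> verts (edge_corona G H)" "i = ?c x" by blast
    show "i \<in> {1..m + n}"
    proof (cases x)
      case (Inl a)
      then show ?thesis using x f(2) by auto
    next
      case (Inr q)
      then obtain e h where "x = Inr (e, h)" by (cases q) auto
      then show ?thesis using x g by auto
    qed
  qed
  have "inj_on ?c (Inl ` verts G)" using f(1) by (auto simp: inj_on_def)
  moreover fix x y assume "x \<in> verts (edge_corona G H)" "y \<in> verts (edge_corona G H)" "x \<noteq> y"
  then obtain p where "is_path (edge_corona G H) p x y" "set (butlast (tl p)) \<subseteq> Inl ` verts G"
    using edge_corona_path_through_base[OF assms(1,2)] by blast
  ultimately show "\<exists>p. is_path (edge_corona G H) p x y \<and> inj_on ?c (set (butlast (tl p)))"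
    using inj_on_subset by blast
qed

lemma edge_corona_colour_class_Inl:
  assumes "inj_on f (verts G)" and "f ` verts G \<subseteq> {..<m}" and "s \<in> verts G"
  shows "{w \<in> verts (edge_corona G H). edge_corona_colouring m f g w = Suc (f s)} = {Inl s}"
proof (intro equalityI subsetI)
  fix w assume w: "w \<in> {w \<in> verts (edge_corona G H). edge_corona_colouring m f g w = Suc (f s)}"
  show "w \<in> {Inl s}"
  proof (cases w)
    case (Inl b)
    then show ?thesis using w assms(1,3) by (auto dest: inj_onD)
  next
    case (Inr q)
    then obtain e h where "w = Inr (e, h)" by (cases q) auto
    then show ?thesis using w assms(2,3) by auto
  qed
qed (use assms(3) in auto)

lemma rainbow_code_edge_corona_colouring_separates_copies:
  assumes lk: "linked (edge_corona G H)" and wf: "wf_graph G"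
    and f: "inj_on f (verts G)" "f ` verts G \<subseteq> {..<m}"
    and e: "e \<in> edges G" "e' \<in> edges G" "e \<noteq> e'" and h: "h \<in> verts H"
  shows "rainbow_code (edge_corona G H) (m + n) (edge_corona_colouring m f g) (Inr (e, h)) \<noteq>
         rainbow_code (edge_corona G H) (m + n) (edge_corona_colouring m f g) (Inr (e', h))"
proof
  let ?C = "edge_corona G H"
  obtain s where s: "s \<in> e" "s \<notin> e'" using edge_has_endpoint_outside[OF wf e] by blast
  then have "s \<in> verts G" using wf_graph_edgeE[OF wf e(1)] by blast
  assume "rainbow_code ?C (m + n) (edge_corona_colouring m f g) (Inr (e, h)) =
          rainbow_code ?C (m + n) (edge_corona_colouring m f g) (Inr (e', h))"
  moreover have "Suc (f s) \<in> {1..m + n}" using f(2) \<open>s \<in> verts G\<close> by auto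
  ultimately have "dist_set ?C (Inr (e, h)) {w \<in> verts ?C. edge_corona_colouring m f g w = Suc (f s)} =
      dist_set ?C (Inr (e', h)) {w \<in> verts ?C. edge_corona_colouring m f g w = Suc (f s)}"
    unfolding rainbow_code_eq_iff by blast
  then have "dist_set ?C (Inr (e, h)) {Inl s} = dist_set ?C (Inr (e', h)) {Inl s}"
    unfolding edge_corona_colour_class_Inl[OF f \<open>s \<in> verts G\<close>] .
  then have eq: "gdist ?C (Inr (e, h)) (Inl s) = gdist ?C (Inr (e', h)) (Inl s)"
    unfolding dist_set_def by simp
  have "gdist ?C (Inr (e, h)) (Inl s) = 1"
    using gdist_eq_1_iff[OF is_path_edge[of ?C "Inr (e, h)" "Inl s"]] \<open>s \<in> verts G\<close> s e h by simp
  moreover have "Inr (e', h) \<in> verts ?C" "Inl s \<in> verts ?C" using \<open>s \<in> verts G\<close> e h by auto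
  then obtain p where p: "is_path ?C p (Inr (e', h)) (Inl s)" using lk unfolding linked_def by blast
  have "gdist ?C (Inr (e', h)) (Inl s) \<noteq> 1" using gdist_eq_1_iff[OF p] s(2) by simp
  ultimately show False using eq by simp
qed

lemma locating_edge_corona_colouring:
  assumes "linked G" and wf: "wf_graph G" and "finite (verts H)"
    and f: "inj_on f (verts G)" "f ` verts G \<subseteq> {..<m}"
    and g: "inj_on g (verts H)" "g ` verts H \<subseteq> {..<n}"
  shows "locating_rainbow_coloring (edge_corona G H) (m + n) (edge_corona_colouring m f g)"
  unfolding locating_rainbow_coloring_def
proof (intro conjI inj_onI)
  let ?C = "edge_corona G H" and ?c = "edge_corona_colouring m f g"
  show rb: "rainbow_vertex_coloring ?C (m + n) ?c"
    using rainbow_edge_corona_colouring[OF assms(1,2) f g(2)] .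
  then have lk: "linked ?C" by (rule linked_if_rainbow_vertex_coloring)
  fix x y assume x: "x \<in> verts ?C" and y: "y \<in> verts ?C"
    and code: "rainbow_code ?C (m + n) ?c x = rainbow_code ?C (m + n) ?c y"
  have "?c ` verts ?C \<subseteq> {1..m + n}" using rb unfolding rainbow_vertex_coloring_def by blast
  from same_colour_if_rainbow_code_eq[OF lk finite_verts_edge_corona[OF wf assms(3)] x y this code]
  have "?c x = ?c y" .
  then show "x = y"
  proof (cases x; cases y)
    fix a b assume "x = Inl a" "y = Inl b" "?c x = ?c y"
    then show "x = y" using x y f(1) by (auto dest: inj_onD)
  next
    fix a q assume "x = Inl a" "y = Inr q" "?c x = ?c y"
    then show "x = y" using x y f(2) by (cases q) auto
  next
    fix q b assume "x = Inr q" "y = Inl b" "?c x = ?c y"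
    then show "x = y" using x y f(2) by (cases q) auto
  next
    fix q q' assume xq: "x = Inr q" and yq: "y = Inr q'" and "?c x = ?c y"
    obtain e h e' h' where x': "x = Inr (e, h)" and y': "y = Inr (e', h')"
      using xq yq by (cases q, cases q') auto
    then have "h = h'" "e \<in> edges G" "e' \<in> edges G" "h \<in> verts H"
      using \<open>?c x = ?c y\<close> x y g(1) by (auto dest: inj_onD)
    show "x = y"
    proof (rule ccontr)
      assume "x \<noteq> y"
      then have "e \<noteq> e'" using x' y' \<open>h = h'\<close> by simp
      from rainbow_code_edge_corona_colouring_separates_copies[OF lk wf f _ _ this]
      show False using code x' y' \<open>h = h'\<close> \<open>e \<in> edges G\<close> \<open>e' \<in> edges G\<close> \<open>h \<in> verts H\<close> by simp
    qed
  qed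
qed

lemma edge_corona_locating_colouring_exists:
  assumes "connected_graph G" and "finite (verts H)"
  shows "\<exists>c. locating_rainbow_coloring (edge_corona G H) (card (verts G) + card (verts H)) c"
proof -
  have wf: "wf_graph G" using assms(1) unfolding connected_graph_def by blast
  obtain f where "bij_betw f (verts G) {..<card (verts G)}"
    using ex_bij_betw_finite_nat wf unfolding wf_graph_def atLeast0LessThan by blast
  then have f: "inj_on f (verts G)" "f ` verts G \<subseteq> {..<card (verts G)}"
    unfolding bij_betw_def by auto
  obtain g where "bij_betw g (verts H) {..<card (verts H)}"
    using ex_bij_betw_finite_nat assms(2) unfolding atLeast0LessThan by blast
  then have g: "inj_on g (verts H)" "g ` verts H \<subseteq> {..<card (verts H)}"
    unfolding bij_betw_def by auto
  from locating_edge_corona_colouring[OF linked_if_connected_graph[OF assms(1)] wf assms(2) f g]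
  show ?thesis by blast
qed

theorem lemma5:
  fixes T :: "'a ugraph" and K :: "'b ugraph" and m n :: nat
  assumes "is_tree T" and "card (verts T) = m" and "m \<ge> 2"
    and "is_complete K" and "card (verts K) = n" and "n \<ge> 2"
  shows "max (rvc T) (n + 2) \<le> rvcl (edge_corona T K) \<and>
         rvcl (edge_corona T K) \<le> 2 * m + n - 2"
proof -
  let ?C = "edge_corona T K"
  have "connected_graph T" and wf: "wf_graph T"
    using assms(1) unfolding is_tree_def connected_graph_def by auto
  have "finite (verts K)" using assms(5,6) card.infinite by fastforce
  then obtain c0 where "locating_rainbow_coloring ?C (m + n) c0"
    using edge_corona_locating_colouring_exists[OF \<open>connected_graph T\<close>] assms(2,5) by blast
  then have upper: "rvcl ?C \<le> m + n" and "\<exists>c. locating_rainbow_coloring ?C (rvcl ?C) c"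
    using rvcl_le locating_rainbow_coloring_rvcl by blast+
  then obtain c where c: "locating_rainbow_coloring ?C (rvcl ?C) c" by blast
  have "n + 2 \<le> rvcl ?C"
    using edge_corona_locating_colours_ge[OF assms(1) _ assms(4) \<open>finite (verts K)\<close> c] assms(2,3,5)
    by simp
  moreover have "rvc T \<le> rvcl ?C"
    using c rainbow_vertex_coloring_restrict_edge_corona[OF wf] rvc_le
    unfolding locating_rainbow_coloring_def by blast
  ultimately show ?thesis using upper assms(3) by simp
qed

end
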